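(* Fix an integer $d\ge1$ and let $S_d=\langle a_0,\dots,a_d,s\mid s a_0 s^{-1}a_0^{-1},\ a_{i+1}a_ia_{i+1}^{-1}a_0^{-1}\ (0\le i<d)\rangle$. For every generator $u\in\{s,a_0,\dots,a_{d-1}\}$ (i.e., every generator $u\neq a_d$) we have \[ \bigl|\mathrm{erim}(\mathrm{Fan}(u^n,a_d^n))\bigr|\asymp n^d,\qquad \mathrm{Area}(\mathrm{Fan}(u^n,a_d^n))\asymp n^{d+1}. \]
   Context: For functions $f,g$ on positive integers, $f\asymp g$ means there are constants $c,C>0$ with $c\,g(n)\le f(n)\le C\,g(n)$ for all $n\ge1$. $\mathrm{Area}$ of a fan is its number of square $2$-cells, and $|w|$ is word length. Each relator of $S_d$ has the form $\lambda p\lambda^{-1}q^{-1}$ with $(\lambda,p,q)=(s,a_0,a_0)$ or $(a_{i+1},a_i,a_0)$. In the unit square of such a relator in the presentation complex, reading from a corner $B$: $\lambda$ goes from $B$ to $Q$, $p$ from $Q$ to the top corner $T$, $\lambda$ from $R$ to $T$, $q$ from $B$ to $R$; the edges $p,\lambda$ into $T$ are the top edges. The descending link is the graph on the generators in which $u,v$ are adjacent iff some relator square has top edges labeled $u$ and $v$; for $S_d$ it is the path $s - a_0 - a_1 - \cdots - a_d$, and each adjacent pair corresponds to a unique relator. For a relator $e$ put $x_e=q^{-1}\lambda$. Simple fans: $\mathrm{Fan}(a,a)$ is a single edge labeled $a$ (apex at its end), empty rims, no squares. For distinct generators $a,b$, let $a=v_0,\dots,v_k=b$ be the path in the descending link,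 take copies $C_i$ of the relator square with top edges $v_{i-1},v_i$, and glue the top edge $v_i$ of $C_i$ to that of $C_{i+1}$ ($1\le i<k$); the common top corner is the apex. The vertex rim is the concatenation of the two-letter words read along the bottom of $C_i$ from the initial vertex of its top edge $v_{i-1}$ to the initial vertex of its top edge $v_i$ (each is $q^{-1}\lambda$ or $\lambda^{-1}q$), so it has the form $a_1^{-1}b_1\cdots a_k^{-1}b_k$; the edge rim $\mathrm{erim}$ replaces $q^{-1}\lambda$ by $x_e$ and $\lambda^{-1}q$ by $x_e^{-1}$. Fans of height $n\ge2$: for positive words $u=au'$, $v=bv'$ of length $n$ with $a,b$ generators, let $F'=\mathrm{Fan}(u',v')$ with vertex rim $a_1^{-1}b_1\cdots a_k^{-1}b_k$, put $b_0=a$, $a_{k+1}=b$, and attach for $i=1,\dots,k+1$ the simple fan $\mathrm{Fan}(b_{i-1},a_i)$ with apex at the rim vertex where the edges $b_{i-1}$ and $a_i$ terminate (for $i=1$, the initial vertex of the side $u'$, the new edge $a$ extending that side; symmetrically for $i=k+1$), identifying its top edges with the corresponding edges. This is $\mathrm{Fan}(u,v)$; its vertex and edge rims are the concatenations of those of the attached simple fans. *)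

theory Defs
  imports Complex_Main
begin

(* Generators of S_d: s = S, a_i = A i (valid for i <= d). *)
datatype gen = S | A nat

(* Relators lambda p lambda^-1 q^-1 of S_d:
   Rs    : (lambda,p,q) = (s, a_0, a_0)
   Ra i  : (lambda,p,q) = (a_(i+1), a_i, a_0)   (valid for i < d) *)
datatype rel = Rs | Ra nat

fun lam :: "rel \<Rightarrow> gen" where
  "lam Rs = S" | "lam (Ra i) = A (Suc i)"
fun pp :: "rel \<Rightarrow> gen" where
  "pp Rs = A 0" | "pp (Ra i) = A i"
fun qq :: "rel \<Rightarrow> gen" where
  "qq Rs = A 0" | "qq (Ra i) = A 0"

(* Descending link of S_d: the path s - a_0 - a_1 - ... - a_d.
   Position of a generator along this path, and its inverse. *)
fun idx :: "gen \<Rightarrow> nat" where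
  "idx S = 0" | "idx (A i) = Suc i"
fun gen_of :: "nat \<Rightarrow> gen" where
  "gen_of 0 = S" | "gen_of (Suc i) = A i"

(* the unique relator whose square has top edges labelled u and v, for
   u, v adjacent in the descending link (top edges of e are pp e and lam e) *)
definition rel_of :: "gen \<Rightarrow> gen \<Rightarrow> rel" where
  "rel_of u v = (if min (idx u) (idx v) = 0 then Rs else Ra (min (idx u) (idx v) - 1))"

definition dpath :: "gen \<Rightarrow> gen \<Rightarrow> gen list" where
  "dpath a b = map gen_of (if idx a \<le> idx b then [idx a ..< Suc (idx b)]
                           else rev [idx b ..< Suc (idx a)])"

(* Contribution of the square C_i with top edges v_(i-1), v_i:
   vertex-rim piece a^-1 b stored as the pair (a,b); edge-rim letter x_e^(+-1)
   stored as (e, True) for x_e and (e, False) for x_e^-1.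
   Reading from the initial vertex of the top edge v_(i-1) to that of v_i:
   if v_(i-1) = p (initial vertex Q) the word is lambda^-1 q (letter x_e^-1);
   if v_(i-1) = lambda (initial vertex R) the word is q^-1 lambda (letter x_e). *)
definition square_piece :: "gen \<times> gen \<Rightarrow> (gen \<times> gen) \<times> (rel \<times> bool)" where
  "square_piece uv = (let e = rel_of (fst uv) (snd uv) in
      if fst uv = pp e then ((lam e, qq e), (e, False)) else ((qq e, lam e), (e, True)))"

type_synonym fan_data = "(gen \<times> gen) list \<times> (rel \<times> bool) list \<times> nat"

definition sfan :: "gen \<Rightarrow> gen \<Rightarrow> fan_data" where
  "sfan a b = (let vs = dpath a b; sq = zip vs (tl vs) in
     (map (fst \<circ> square_piece) sq, map (snd \<circ> square_piece) sq, length sq))"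

definition vrim :: "fan_data \<Rightarrow> (gen \<times> gen) list" where "vrim F = fst F"
definition erim :: "fan_data \<Rightarrow> (rel \<times> bool) list" where "erim F = fst (snd F)"
definition Area :: "fan_data \<Rightarrow> nat" where "Area F = snd (snd F)"

(* Fan(u,v) for positive words u, v of the same length n >= 1.
   For n >= 2: u = a u', v = b v', F' = Fan(u',v') with vertex rim
   a_1^-1 b_1 ... a_k^-1 b_k; attach Fan(b_(i-1), a_i), i = 1..k+1,
   with b_0 = a, a_(k+1) = b. *)
fun Fan :: "gen list \<Rightarrow> gen list \<Rightarrow> fan_data" where
  "Fan (a # u') (b # v') =
     (if u' = [] then sfan a b
      else (let F' = Fan u' v';
                bs = a # map snd (vrim F');
                as = map fst (vrim F') @ [b];
                Fs = map (\<lambda>(x, y). sfan x y) (zip bs as)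
            in (concat (map vrim Fs), concat (map erim Fs),
                Area F' + sum_list (map Area Fs))))"
| "Fan _ _ = ([], [], 0)"

definition asymp_eq :: "(nat \<Rightarrow> real) \<Rightarrow> (nat \<Rightarrow> real) \<Rightarrow> bool" where
  "asymp_eq f g \<longleftrightarrow> (\<exists>c C. c > 0 \<and> C > 0 \<and>
      (\<forall>n\<ge>1. c * g n \<le> f n \<and> f n \<le> C * g n))"

end

theory Submission
  imports Defs
begin

text \<open>Every square along the vertex rim of \<open>Fan(u\<^sup>n, a\<^sub>d\<^sup>n)\<close> has top edges
  \<open>v\<^sub>t, v\<^sub>t\<^sub>+\<^sub>1\<close> for consecutive vertices of the descending link, read upwards, so the
  rim is determined by the list of these indices \<open>t\<close>. Passing from height \<open>n\<close> to \<open>n + 1\<close>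
  attaches a simple fan climbing from \<open>s\<close> or \<open>a\<^sub>0\<close> up to \<open>a\<^sub>t\<close> at each rim vertex, which turns
  the index list into an explicit new list. The number of indices \<open>\<ge> j\<close> in the new list is,
  up to an additive error at most \<open>d + 1\<close>, the sum over \<open>m \<ge> j\<close> of the number of indices
  \<open>\<ge> m\<close> in the old one. By the hockey-stick identity these counts grow like
  \<open>(n + e choose e)\<close> with \<open>e = d + 1 - j\<close>, so the rim has length \<open>\<asymp> n\<^sup>d\<close>; the area is
  the sum of the rim lengths of all intermediate heights, hence \<open>\<asymp> n\<^sup>d\<^sup>+\<^sup>1\<close>.\<close>

section \<open>Binomial growth\<close>

lemma binomial_le_Suc_power: "(M + e choose e) \<le> (M + 1) ^ e"
proof (induction e)
  case 0
  then show ?case by simp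
next
  case (Suc e)
  have eq: "Suc e * (M + Suc e choose Suc e) = Suc (M + e) * (M + e choose e)"
    using Suc_times_binomial[of e "M + e"] by simp
  have "Suc (M + e) * (M + e choose e) \<le> Suc (M + e) * (M + 1) ^ e"
    using Suc.IH by (rule mult_left_mono) simp
  also have "\<dots> \<le> (Suc e * (M + 1)) * (M + 1) ^ e"
    by (intro mult_right_mono) (auto simp: algebra_simps)
  finally have "Suc e * (M + Suc e choose Suc e) \<le> Suc e * (M + 1) ^ Suc e"
    using eq by (simp add: algebra_simps)
  then show ?case by (subst (asm) mult_le_cancel1) (simp del: mult_Suc power_Suc)
qed

lemma Suc_power_le_fact_mult_binomial: "(M + 1) ^ e \<le> fact e * (M + e choose e)"
proof (induction e)
  case 0
  then show ?case by simp
next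
  case (Suc e)
  have eq: "Suc e * (M + Suc e choose Suc e) = Suc (M + e) * (M + e choose e)"
    using Suc_times_binomial[of e "M + e"] by simp
  have "(M + 1) ^ Suc e = (M + 1) * (M + 1) ^ e" by simp
  also have "\<dots> \<le> Suc (M + e) * (fact e * (M + e choose e))"
    using Suc by (intro mult_mono) auto
  also have "\<dots> = fact e * (Suc e * (M + Suc e choose Suc e))"
    using eq by (simp add: algebra_simps)
  also have "\<dots> = fact (Suc e) * (M + Suc e choose Suc e)" by (simp add: algebra_simps)
  finally show ?case .
qed

lemma sum_choose_lower_from_1: "(\<Sum>f = 1..e. n + f choose f) + 1 = (Suc n + e choose e)"
proof -
  have "{..e} = insert 0 {1..e}" by auto
  then have "(\<Sum>k\<le>e. n + k choose k) = (\<Sum>f = 1..e. n + f choose f) + 1" by simp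
  then show ?thesis using sum_choose_lower[of n e] by simp
qed

lemma binomial_bounds_of_partial_sum_recurrence:
  fixes h :: "nat \<Rightarrow> nat \<Rightarrow> nat"
  assumes base: "\<And>e. 1 \<le> e \<Longrightarrow> e \<le> d \<Longrightarrow> 1 \<le> h 0 e \<and> h 0 e \<le> B"
    and step: "\<And>n e. 1 \<le> e \<Longrightarrow> e \<le> d \<Longrightarrow>
      (\<Sum>f = 1..e. h n f) + 1 \<le> h (Suc n) e \<and> h (Suc n) e \<le> (\<Sum>f = 1..e. h n f) + B"
  shows "1 \<le> e \<Longrightarrow> e \<le> d \<Longrightarrow> (n + e choose e) \<le> h n e \<and> h n e \<le> B * (n + e choose e)"
proof (induction n arbitrary: e)
  case 0
  then show ?case using base[of e] by simp
next
  case (Suc n)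
  have lower: "(\<Sum>f = 1..e. n + f choose f) \<le> (\<Sum>f = 1..e. h n f)"
    by (rule sum_mono) (use Suc in auto)
  have upper: "(\<Sum>f = 1..e. h n f) \<le> (\<Sum>f = 1..e. B * (n + f choose f))"
    by (rule sum_mono) (use Suc in auto)
  have hockey: "(\<Sum>f = 1..e. n + f choose f) + 1 = (Suc n + e choose e)"
    by (rule sum_choose_lower_from_1)
  have rec: "(\<Sum>f = 1..e. h n f) + 1 \<le> h (Suc n) e \<and> h (Suc n) e \<le> (\<Sum>f = 1..e. h n f) + B"
    using step Suc.prems by blast
  have "(Suc n + e choose e) \<le> h (Suc n) e" using lower rec hockey by linarith
  moreover have "h (Suc n) e \<le> B * (Suc n + e choose e)"
  proof -
    have "h (Suc n) e \<le> (\<Sum>f = 1..e. B * (n + f choose f)) + B" using rec upper by linarith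
    also have "\<dots> = B * ((\<Sum>f = 1..e. n + f choose f) + 1)"
      by (simp add: sum_distrib_left algebra_simps)
    also have "\<dots> = B * (Suc n + e choose e)" by (simp only: hockey)
    finally show ?thesis .
  qed
  ultimately show ?case by simp
qed

lemma asymp_eq_of_nat_bounds:
  fixes F :: "nat \<Rightarrow> nat"
  assumes "\<And>N. N \<ge> 1 \<Longrightarrow> N ^ e \<le> K * F N \<and> F N \<le> C * N ^ e" "K > 0" "C > 0"
  shows "asymp_eq (\<lambda>n. real (F n)) (\<lambda>n. real n ^ e)"
  unfolding asymp_eq_def
proof (rule exI[of _ "1 / real K"], rule exI[of _ "real C"], intro conjI allI impI)
  show "0 < 1 / real K" "0 < real C" using assms by auto
  fix n :: nat
  assume n: "1 \<le> n"
  have "real n ^ e \<le> real K * real (F n)"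
    using assms(1)[OF n] by (metis of_nat_le_iff of_nat_mult of_nat_power)
  then show "1 / real K * real n ^ e \<le> real (F n)" using assms(2) by (simp add: field_simps)
  show "real (F n) \<le> real C * real n ^ e"
    using assms(1)[OF n] by (metis of_nat_le_iff of_nat_mult of_nat_power)
qed

section \<open>Fans as lists of rim indices\<close>

lemma idx_gen_of [simp]: "idx (gen_of k) = k"
  by (cases k) auto

lemma gen_of_idx [simp]: "gen_of (idx a) = a"
  by (cases a) auto

text \<open>The vertex-rim piece \<open>a\<^sup>-\<^sup>1 b\<close> of the square with top edges \<open>gen_of t\<close>, \<open>gen_of (t + 1)\<close>,
  read from the lower one: \<open>a = a\<^sub>t\<close>, and \<open>b\<close> is \<open>s\<close> for \<open>t = 0\<close> and \<open>a\<^sub>0\<close> otherwise.\<close>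

definition rim_letter :: "nat \<Rightarrow> gen \<times> gen" where
  "rim_letter t = (gen_of (Suc t), gen_of (min t 1))"

lemma square_piece_ascending: "fst (square_piece (gen_of k, A k)) = rim_letter k"
  by (cases k) (auto simp: square_piece_def rel_of_def rim_letter_def Let_def)

lemma zip_tl_map_upt:
  "i \<le> j \<Longrightarrow> zip (map f [i..<Suc j]) (tl (map f [i..<Suc j])) = map (\<lambda>k. (f k, f (Suc k))) [i..<j]"
  by (rule nth_equalityI) (auto simp: nth_tl simp del: upt_Suc)

lemma sfan_ascending:
  assumes "idx a \<le> idx b"
  shows "vrim (sfan a b) = map rim_letter [idx a..<idx b]"
    and "length (erim (sfan a b)) = idx b - idx a"
    and "Area (sfan a b) = idx b - idx a"
proof -
  have squares: "zip (dpath a b) (tl (dpath a b)) = map (\<lambda>k. (gen_of k, gen_of (Suc k))) [idx a..<idx b]"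
    using assms zip_tl_map_upt[of "idx a" "idx b" gen_of] by (simp add: dpath_def del: upt_Suc)
  show "vrim (sfan a b) = map rim_letter [idx a..<idx b]"
    by (simp add: sfan_def vrim_def squares Let_def square_piece_ascending)
  show "length (erim (sfan a b)) = idx b - idx a"
    unfolding sfan_def erim_def Let_def squares by simp
  show "Area (sfan a b) = idx b - idx a"
    unfolding sfan_def Area_def Let_def squares by simp
qed

text \<open>For a rim with index list \<open>xs\<close>, the simple fans \<open>Fan(b\<^sub>i\<^sub>-\<^sub>1, a\<^sub>i)\<close> attached in one step
  go from \<open>gen_of x\<close> to \<open>gen_of y\<close> for the pairs \<open>(x, y)\<close> below, where \<open>r = idx u\<close> and the
  last fan ends at \<open>a\<^sub>d\<close>.\<close>

definition attached_ranges :: "nat \<Rightarrow> nat \<Rightarrow> nat list \<Rightarrow> (nat \<times> nat) list" where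
  "attached_ranges r d xs = zip (r # map (\<lambda>t. min t 1) xs) (map Suc xs @ [Suc d])"

definition rim_step :: "nat \<Rightarrow> nat \<Rightarrow> nat list \<Rightarrow> nat list" where
  "rim_step r d xs = concat (map (\<lambda>(x, y). [x..<y]) (attached_ranges r d xs))"

text \<open>The rim indices of \<open>Fan(u\<^sup>n\<^sup>+\<^sup>1, a\<^sub>d\<^sup>n\<^sup>+\<^sup>1)\<close> for \<open>idx u = r\<close> (note the shift by one).\<close>

fun fan_rim :: "nat \<Rightarrow> nat \<Rightarrow> nat \<Rightarrow> nat list" where
  "fan_rim r d 0 = [r..<Suc d]"
| "fan_rim r d (Suc n) = rim_step r d (fan_rim r d n)"

definition rim_wf :: "nat \<Rightarrow> nat \<Rightarrow> nat list \<Rightarrow> bool" where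
  "rim_wf r d xs \<longleftrightarrow> xs \<noteq> [] \<and> hd xs = r \<and> (\<forall>t\<in>set xs. t \<le> d)"

lemma attached_ranges_Cons:
  "attached_ranges r d (r # ys) =
     (r, Suc r) # zip (map (\<lambda>t. min t 1) (r # ys)) (map Suc ys @ [Suc d])"
  by (simp add: attached_ranges_def)

lemma attached_ranges_ascending:
  assumes "rim_wf r d xs" "(x, y) \<in> set (attached_ranges r d xs)"
  shows "x \<le> y"
proof -
  obtain ys where xs: "xs = r # ys" using assms(1) unfolding rim_wf_def by (cases xs) auto
  show ?thesis
  proof (cases "(x, y) = (r, Suc r)")
    case True
    then show ?thesis by auto
  next
    case False
    then have "(x, y) \<in> set (zip (map (\<lambda>t. min t 1) (r # ys)) (map Suc ys @ [Suc d]))"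
      using assms(2) unfolding xs attached_ranges_Cons by auto
    then have "x \<in> set (map (\<lambda>t. min t 1) (r # ys))" "y \<in> set (map Suc ys @ [Suc d])"
      by (auto dest: set_zip_leftD set_zip_rightD)
    then show ?thesis by auto
  qed
qed

lemma rim_wf_rim_step:
  assumes "rim_wf r d xs"
  shows "rim_wf r d (rim_step r d xs)"
proof -
  obtain ys where xs: "xs = r # ys" using assms unfolding rim_wf_def by (cases xs) auto
  have "\<forall>t\<in>set (rim_step r d xs). t \<le> d"
  proof
    fix t
    assume "t \<in> set (rim_step r d xs)"
    then obtain x y where xy: "(x, y) \<in> set (attached_ranges r d xs)" "t < y"
      by (auto simp: rim_step_def)
    have "y \<le> Suc d"
      using xy(1) assms by (auto simp: rim_wf_def attached_ranges_def dest!: set_zip_rightD)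
    then show "t \<le> d" using xy(2) by simp
  qed
  then show ?thesis by (simp add: rim_wf_def rim_step_def xs attached_ranges_Cons)
qed

lemma rim_wf_fan_rim: "r \<le> d \<Longrightarrow> rim_wf r d (fan_rim r d n)"
proof (induction n)
  case 0
  then show ?case by (auto simp: rim_wf_def upt_conv_Cons simp del: upt_Suc)
next
  case (Suc n)
  then show ?case by (simp add: rim_wf_rim_step)
qed

lemma Fan_Cons_rim_step:
  assumes "u' \<noteq> []" "vrim (Fan u' v') = map rim_letter xs" "rim_wf r d xs" "idx a = r"
  shows "vrim (Fan (a # u') (A d # v')) = map rim_letter (rim_step r d xs)"
    and "length (erim (Fan (a # u') (A d # v'))) = length (rim_step r d xs)"
    and "Area (Fan (a # u') (A d # v')) = Area (Fan u' v') + length (rim_step r d xs)"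
proof -
  let ?fan = "\<lambda>(x, y). sfan (gen_of x) (gen_of y)"
  let ?R = "attached_ranges r d xs"
  have ranges: "zip (a # map snd (vrim (Fan u' v'))) (map fst (vrim (Fan u' v')) @ [A d])
      = map (\<lambda>(x, y). (gen_of x, gen_of y)) ?R"
  proof -
    have "map (\<lambda>(x, y). (gen_of x, gen_of y)) ?R =
        zip (map gen_of (r # map (\<lambda>t. min t 1) xs)) (map gen_of (map Suc xs @ [Suc d]))"
      unfolding attached_ranges_def zip_map_map ..
    then show ?thesis using assms(2,4) by (auto simp: rim_letter_def comp_def)
  qed
  have F: "Fan (a # u') (A d # v') =
      (concat (map (vrim \<circ> ?fan) ?R), concat (map (erim \<circ> ?fan) ?R),
       Area (Fan u' v') + sum_list (map (Area \<circ> ?fan) ?R))"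
    using assms(1) by (simp add: Let_def ranges comp_def split_def)
  have ascending: "\<And>p. p \<in> set ?R \<Longrightarrow> fst p \<le> snd p"
    using attached_ranges_ascending[OF assms(3)] by auto
  have vrims: "map (vrim \<circ> ?fan) ?R = map (\<lambda>(x, y). map rim_letter [x..<y]) ?R"
    and erims: "map (length \<circ> erim \<circ> ?fan) ?R = map (length \<circ> (\<lambda>(x, y). [x..<y])) ?R"
    and areas: "map (Area \<circ> ?fan) ?R = map (length \<circ> (\<lambda>(x, y). [x..<y])) ?R"
    by (auto intro!: map_cong simp: sfan_ascending dest: ascending)
  show "vrim (Fan (a # u') (A d # v')) = map rim_letter (rim_step r d xs)"
    by (simp only: F vrim_def fst_conv vrims) (simp add: rim_step_def map_concat split_def comp_def)
  show "length (erim (Fan (a # u') (A d # v'))) = length (rim_step r d xs)"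
    by (simp only: F erim_def fst_conv snd_conv length_concat map_map o_assoc erims)
      (simp add: rim_step_def length_concat)
  show "Area (Fan (a # u') (A d # v')) = Area (Fan u' v') + length (rim_step r d xs)"
    by (simp only: F Area_def snd_conv areas) (simp add: rim_step_def length_concat)
qed

lemma Fan_replicate_fan_rim:
  assumes "idx u = r" "r \<le> d"
  shows "vrim (Fan (replicate (Suc n) u) (replicate (Suc n) (A d))) = map rim_letter (fan_rim r d n)
       \<and> length (erim (Fan (replicate (Suc n) u) (replicate (Suc n) (A d)))) = length (fan_rim r d n)
       \<and> Area (Fan (replicate (Suc n) u) (replicate (Suc n) (A d))) = (\<Sum>k\<le>n. length (fan_rim r d k))"
proof (induction n)
  case 0
  then show ?case using sfan_ascending[of u "A d"] assms by (simp del: upt_Suc)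
next
  case (Suc n)
  then show ?case
    using Fan_Cons_rim_step[of "replicate (Suc n) u" "replicate (Suc n) (A d)" "fan_rim r d n" r d u]
      rim_wf_fan_rim assms by simp
qed

section \<open>Counting rim indices\<close>

definition count_ge :: "nat \<Rightarrow> nat list \<Rightarrow> nat" where
  "count_ge j xs = length (filter (\<lambda>t. j \<le> t) xs)"

lemma count_ge_upt: "count_ge j [x..<y] = y - max x j"
  unfolding count_ge_def
proof (induction y)
  case 0
  then show ?case by simp
next
  case (Suc y)
  show ?case
  proof (cases "x \<le> y")
    case True
    then show ?thesis using Suc by (cases "j \<le> y") (auto simp: max_def)
  qed simp
qed

lemma count_ge_append: "count_ge j (xs @ ys) = count_ge j xs + count_ge j ys"
  by (simp add: count_ge_def)

lemma count_ge_concat: "count_ge j (concat xss) = sum_list (map (count_ge j) xss)"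
  by (induction xss) (auto simp: count_ge_def)

lemma count_ge_Cons: "count_ge m (r # ys) = (if m \<le> r then 1 else 0) + count_ge m ys"
  by (simp add: count_ge_def)

lemma count_list_upt_0: "count_list [x..<y] 0 = (if x = 0 \<and> 0 < y then 1 else 0)"
proof (induction y)
  case 0
  then show ?case by simp
next
  case (Suc y)
  show ?case
  proof (cases "x \<le> y")
    case True
    then show ?thesis using Suc by (cases "y = 0") auto
  qed simp
qed

lemma count_list_concat: "count_list (concat xss) a = sum_list (map (\<lambda>xs. count_list xs a) xss)"
  by (induction xss) auto

lemma length_eq_count_list_0_plus_count_ge_1: "length xs = count_list xs 0 + count_ge 1 xs"
  by (induction xs) (auto simp: count_ge_def)

lemma sum_list_zip_diff_max:
  "length as = length bs \<Longrightarrow> \<forall>x\<in>set as. x \<le> j \<Longrightarrow>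
   sum_list (map (\<lambda>(x, y). y - max x j) (zip as bs)) = sum_list (map (\<lambda>y. y - j) bs)"
proof (induction as arbitrary: bs)
  case Nil
  then show ?case by simp
next
  case (Cons a as)
  then show ?case by (cases bs) (auto simp: max_def)
qed

lemma sum_list_zip_starts_at_0:
  "length as = length bs \<Longrightarrow> \<forall>y\<in>set bs. 0 < y \<Longrightarrow>
   sum_list (map (\<lambda>(x, y). if x = 0 \<and> 0 < y then 1 else 0) (zip as bs)) = count_list as 0"
proof (induction as arbitrary: bs)
  case Nil
  then show ?case by simp
next
  case (Cons a as)
  then show ?case by (cases bs) auto
qed

lemma sum_indicator_le: "r \<le> d \<Longrightarrow> (\<Sum>m = j..d. if m \<le> r then 1 else 0 :: nat) = Suc r - j"
proof -
  assume "r \<le> d"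
  then have "{j..d} \<inter> {m. m \<le> r} = {j..r}" by auto
  then show ?thesis by (simp add: sum.If_cases)
qed

lemma sum_list_Suc_diff_eq_sum_count_ge:
  "\<forall>t\<in>set ys. t \<le> d \<Longrightarrow> sum_list (map (\<lambda>t. Suc t - j) ys) = (\<Sum>m = j..d. count_ge m ys)"
proof (induction ys)
  case Nil
  then show ?case by (simp add: count_ge_def)
next
  case (Cons t ys)
  have "(\<Sum>m = j..d. count_ge m (t # ys)) =
      (\<Sum>m = j..d. if m \<le> t then 1 else 0) + (\<Sum>m = j..d. count_ge m ys)"
    by (simp add: count_ge_Cons sum.distrib)
  also have "\<dots> = Suc t - j + (\<Sum>m = j..d. count_ge m ys)"
    using Cons.prems by (simp add: sum_indicator_le)
  finally show ?case using Cons by simp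
qed

lemma sum_atLeastAtMost_reflect:
  "e \<le> d \<Longrightarrow> (\<Sum>m = Suc d - e..d. g m) = (\<Sum>f = 1..e. g (Suc d - f))"
proof (induction e)
  case 0
  then show ?case by simp
next
  case (Suc e)
  have "{d - e..d} = insert (d - e) {Suc d - e..d}" using Suc.prems by auto
  moreover have "{1..Suc e} = insert (Suc e) {1..e}" by auto
  ultimately show ?case using Suc by (simp add: add.commute)
qed

lemma rim_step_Cons:
  "rim_step r d (r # ys) =
     [r..<Suc r] @ concat (map (\<lambda>(x, y). [x..<y]) (zip (map (\<lambda>t. min t 1) (r # ys)) (map Suc ys @ [Suc d])))"
  unfolding rim_step_def attached_ranges_Cons by simp

text \<open>Every attached fan starts at index \<open>0\<close> or \<open>1\<close>, so for \<open>j \<ge> 1\<close> a range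
  \<open>[min t 1..<Suc t']\<close> contributes \<open>Suc t' - j\<close> indices \<open>\<ge> j\<close>, independently of \<open>t\<close>.\<close>

lemma count_ge_rim_step:
  assumes "1 \<le> j"
  shows "count_ge j (rim_step r d (r # ys)) =
    (if j \<le> r then 1 else 0) + sum_list (map (\<lambda>t. Suc t - j) ys) + (Suc d - j)"
proof -
  let ?zs = "zip (map (\<lambda>t. min t 1) (r # ys)) (map Suc ys @ [Suc d])"
  have "count_ge j (rim_step r d (r # ys)) =
      count_ge j [r..<Suc r] + sum_list (map (\<lambda>(x, y). y - max x j) ?zs)"
    unfolding rim_step_Cons count_ge_append count_ge_concat
    by (simp add: count_ge_upt split_def comp_def del: upt_Suc)
  also have "sum_list (map (\<lambda>(x, y). y - max x j) ?zs) = sum_list (map (\<lambda>y. y - j) (map Suc ys @ [Suc d]))"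
    by (rule sum_list_zip_diff_max) (use assms in auto)
  finally show ?thesis by (simp add: count_ge_def comp_def)
qed

lemma count_list_0_rim_step:
  "count_list (rim_step r d (r # ys)) 0 = (if r = 0 then 1 else 0) + count_list (r # ys) 0"
proof -
  let ?zs = "zip (map (\<lambda>t. min t 1) (r # ys)) (map Suc ys @ [Suc d])"
  have "count_list (rim_step r d (r # ys)) 0 =
      count_list [r..<Suc r] 0 + sum_list (map (\<lambda>(x, y). if x = 0 \<and> 0 < y then 1 else 0) ?zs)"
    unfolding rim_step_Cons count_list_append count_list_concat
    by (simp add: count_list_upt_0 split_def comp_def del: upt_Suc)
  also have "sum_list (map (\<lambda>(x, y). if x = 0 \<and> 0 < y then 1 else 0) ?zs) =
      count_list (map (\<lambda>t. min t 1) (r # ys)) 0"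
    by (rule sum_list_zip_starts_at_0) auto
  also have "count_list (map (\<lambda>t. min t 1) (r # ys)) 0 = count_list (r # ys) 0"
    by (induction ys) auto
  finally show ?thesis by (simp add: count_list_upt_0)
qed

lemma count_ge_rim_step_bounds:
  assumes "r \<le> d" "1 \<le> j" "j \<le> d" "rim_wf r d xs"
  shows "(\<Sum>m = j..d. count_ge m xs) + 1 \<le> count_ge j (rim_step r d xs)
       \<and> count_ge j (rim_step r d xs) \<le> (\<Sum>m = j..d. count_ge m xs) + Suc d"
proof -
  obtain ys where xs: "xs = r # ys" using assms(4) unfolding rim_wf_def by (cases xs) auto
  have ys_le: "\<forall>t\<in>set ys. t \<le> d" using assms(4) xs by (auto simp: rim_wf_def)
  define rest where "rest = (\<Sum>m = j..d. count_ge m ys)"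
  have new: "count_ge j (rim_step r d xs) = (if j \<le> r then 1 else 0) + rest + (Suc d - j)"
    using count_ge_rim_step[OF assms(2), of r d ys] sum_list_Suc_diff_eq_sum_count_ge[OF ys_le, of j]
    by (simp add: xs rest_def)
  have old: "(\<Sum>m = j..d. count_ge m xs) = (Suc r - j) + rest"
    by (simp add: xs count_ge_Cons sum.distrib sum_indicator_le[OF assms(1)] rest_def)
  show ?thesis using new old assms by auto
qed

lemma count_ge_1_fan_rim_bounds:
  assumes "r \<le> d" "1 \<le> d"
  shows "(n + d choose d) \<le> count_ge 1 (fan_rim r d n)
       \<and> count_ge 1 (fan_rim r d n) \<le> Suc d * (n + d choose d)"
proof -
  let ?h = "\<lambda>n e. count_ge (Suc d - e) (fan_rim r d n)"
  have "(n + d choose d) \<le> ?h n d \<and> ?h n d \<le> Suc d * (n + d choose d)"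
  proof (rule binomial_bounds_of_partial_sum_recurrence[where h = ?h and d = d and B = "Suc d"])
    fix e assume "1 \<le> e" "e \<le> d"
    then show "1 \<le> ?h 0 e \<and> ?h 0 e \<le> Suc d"
      using assms by (simp add: count_ge_upt del: upt_Suc)
  next
    fix n e assume "1 \<le> e" "e \<le> d"
    then show "(\<Sum>f = 1..e. ?h n f) + 1 \<le> ?h (Suc n) e \<and> ?h (Suc n) e \<le> (\<Sum>f = 1..e. ?h n f) + Suc d"
      using count_ge_rim_step_bounds[OF assms(1), of "Suc d - e" "fan_rim r d n"]
        rim_wf_fan_rim[OF assms(1), of n]
        sum_atLeastAtMost_reflect[of e d "\<lambda>m. count_ge m (fan_rim r d n)"] by simp
  qed (use assms in auto)
  then show ?thesis by simp
qed

lemma count_list_0_fan_rim_le: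
  assumes "r \<le> d"
  shows "count_list (fan_rim r d n) 0 \<le> Suc n"
proof (induction n)
  case 0
  then show ?case by (simp add: count_list_upt_0 del: upt_Suc)
next
  case (Suc n)
  obtain ys where xs: "fan_rim r d n = r # ys"
    using rim_wf_fan_rim[OF assms, of n] unfolding rim_wf_def by (cases "fan_rim r d n") auto
  have "count_list (fan_rim r d (Suc n)) 0 \<le> 1 + count_list (fan_rim r d n) 0"
    using count_list_0_rim_step[of r d ys] by (simp add: xs)
  then show ?case using Suc by linarith
qed

lemma length_fan_rim_binomial_bounds:
  assumes "r \<le> d" "1 \<le> d"
  shows "(n + d choose d) \<le> length (fan_rim r d n)
       \<and> length (fan_rim r d n) \<le> Suc n + Suc d * (n + d choose d)"
  using count_ge_1_fan_rim_bounds[OF assms, of n] count_list_0_fan_rim_le[OF assms(1), of n]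
    length_eq_count_list_0_plus_count_ge_1[of "fan_rim r d n"] by simp

lemma length_fan_rim_power_bounds:
  assumes "r \<le> d" "1 \<le> d"
  shows "Suc n ^ d \<le> fact d * length (fan_rim r d n) \<and> length (fan_rim r d n) \<le> (d + 2) * Suc n ^ d"
proof
  have bounds: "(n + d choose d) \<le> length (fan_rim r d n)"
      "length (fan_rim r d n) \<le> Suc n + Suc d * (n + d choose d)"
    using length_fan_rim_binomial_bounds[OF assms] by auto
  have "Suc n ^ d \<le> fact d * (n + d choose d)"
    using Suc_power_le_fact_mult_binomial[of n d] by simp
  also have "\<dots> \<le> fact d * length (fan_rim r d n)" using bounds(1) by (rule mult_left_mono) simp
  finally show "Suc n ^ d \<le> fact d * length (fan_rim r d n)" .
  have "Suc n ^ 1 \<le> Suc n ^ d" using assms(2) by (intro power_increasing) auto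
  moreover have "Suc d * (n + d choose d) \<le> Suc d * Suc n ^ d"
    by (rule mult_left_mono) (use binomial_le_Suc_power[of n d] in simp_all)
  ultimately show "length (fan_rim r d n) \<le> (d + 2) * Suc n ^ d" using bounds(2) by simp
qed

lemma sum_length_fan_rim_power_bounds:
  assumes "r \<le> d" "1 \<le> d"
  shows "Suc n ^ (d + 1) \<le> fact (d + 1) * (\<Sum>k\<le>n. length (fan_rim r d k))
       \<and> (\<Sum>k\<le>n. length (fan_rim r d k)) \<le> (d + 2) * Suc n ^ (d + 1)"
proof
  have "(\<Sum>k\<le>n. k + d choose d) = (\<Sum>k\<le>n. d + k choose k)"
    by (intro sum.cong refl) (metis add.commute binomial_symmetric add_diff_cancel_right' le_add2)
  also have "\<dots> = Suc (d + n) choose n" by (rule sum_choose_lower)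
  also have "\<dots> = n + (d + 1) choose (d + 1)"
    using binomial_symmetric[of n "Suc (d + n)"] by (simp add: add.commute)
  finally have hockey: "(\<Sum>k\<le>n. k + d choose d) = n + (d + 1) choose (d + 1)" .
  have "Suc n ^ (d + 1) \<le> fact (d + 1) * (n + (d + 1) choose (d + 1))"
    using Suc_power_le_fact_mult_binomial[of n "d + 1"] by simp
  also have "\<dots> \<le> fact (d + 1) * (\<Sum>k\<le>n. length (fan_rim r d k))"
    unfolding hockey[symmetric]
    by (intro mult_left_mono sum_mono) (use length_fan_rim_binomial_bounds[OF assms] in auto)
  finally show "Suc n ^ (d + 1) \<le> fact (d + 1) * (\<Sum>k\<le>n. length (fan_rim r d k))" .
next
  have "(\<Sum>k\<le>n. length (fan_rim r d k)) \<le> (\<Sum>k\<le>n. (d + 2) * Suc n ^ d)"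
  proof (rule sum_mono)
    fix k assume "k \<in> {..n}"
    then have "Suc k ^ d \<le> Suc n ^ d" by (intro power_mono) auto
    then show "length (fan_rim r d k) \<le> (d + 2) * Suc n ^ d"
      using length_fan_rim_power_bounds[OF assms, of k] by (meson le_trans mult_le_mono2)
  qed
  also have "\<dots> = (d + 2) * Suc n ^ (d + 1)" by (simp add: algebra_simps)
  finally show "(\<Sum>k\<le>n. length (fan_rim r d k)) \<le> (d + 2) * Suc n ^ (d + 1)" .
qed

theorem mainTheorem6:
  fixes d :: nat and u :: gen
  assumes "d \<ge> 1"
    and "u = S \<or> (\<exists>i<d. u = A i)"
  shows "asymp_eq (\<lambda>n. real (length (erim (Fan (replicate n u) (replicate n (A d))))))
                  (\<lambda>n. real n ^ d)
       \<and> asymp_eq (\<lambda>n. real (Area (Fan (replicate n u) (replicate n (A d)))))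
                  (\<lambda>n. real n ^ (d + 1))"
proof
  have rd: "idx u \<le> d" using assms(2) by auto
  show "asymp_eq (\<lambda>n. real (length (erim (Fan (replicate n u) (replicate n (A d)))))) (\<lambda>n. real n ^ d)"
  proof (rule asymp_eq_of_nat_bounds[where K = "fact d" and C = "d + 2"])
    fix N :: nat assume "N \<ge> 1"
    then obtain n where "N = Suc n" by (cases N) auto
    then show "N ^ d \<le> fact d * length (erim (Fan (replicate N u) (replicate N (A d))))
        \<and> length (erim (Fan (replicate N u) (replicate N (A d)))) \<le> (d + 2) * N ^ d"
      using Fan_replicate_fan_rim[OF refl rd, of n] length_fan_rim_power_bounds[OF rd assms(1), of n]
      by simp
  qed auto
  show "asymp_eq (\<lambda>n. real (Area (Fan (replicate n u) (replicate n (A d))))) (\<lambda>n. real n ^ (d + 1))"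
  proof (rule asymp_eq_of_nat_bounds[where K = "fact (d + 1)" and C = "d + 2"])
    fix N :: nat assume "N \<ge> 1"
    then obtain n where "N = Suc n" by (cases N) auto
    then show "N ^ (d + 1) \<le> fact (d + 1) * Area (Fan (replicate N u) (replicate N (A d)))
        \<and> Area (Fan (replicate N u) (replicate N (A d))) \<le> (d + 2) * N ^ (d + 1)"
      using Fan_replicate_fan_rim[OF refl rd, of n] sum_length_fan_rim_power_bounds[OF rd assms(1), of n]
      by (simp only:)
  qed auto
qed

end
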